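(* For any edge-set $F\subseteq E(H)$ with $|F|=\ell$ and any tree embedding $(\mathcal T,\mathcal M,y)$ in the support of $\mathcal D$ that is good for $F$, the number of shattered components in $\mathbb Q^F$ is at most $2\ell\beta$.
   Context: Standing setup. $G=(V,E)$ is an undirected graph with $n=|V|$, demand-pairs $(S_i,T_i)$, $i\in[q]$, of subsets of $V$. $\ell\ge1$ is an integer and $E_\ell\subseteq E$ an edge set such that in $(V,E_\ell)$ every $(S_i,T_i)$ is $\ell$-edge-connected. $x:E\to[0,1]$ satisfies $x_e=1$ for $e\in E_\ell$ and $\sum_{e\in\delta_G(X)}x_e\ge \ell+1$ for every $i\in[q]$ and every $X$ with $T_i\subseteq X\subseteq V\setminus S_i$. $\beta\ge1$ is a real. $\mathsf{LARGE}=\{e: x_e\ge 1/(4\ell\beta)\}$ and $H=(V,\mathsf{LARGE})$. Capacities: $\tilde x_e=1/(4\ell\beta)$ if $e\in\mathsf{LARGE}$; $\tilde x_e=0$ if $x_e<\frac{1}{2n^2}\cdot\frac1{4\ell\beta}$; $\tilde x_e=x_e$ otherwise. A tree embedding $(\mathcal T,\mathcal M,y)$ of $(G,\tilde x)$: $\mathcal T$ is a tree; $\mathcal M$ maps nodes of $\mathcal T$ to vertices of $G$ and is a bijection between leaves of $\mathcal T$ and $V$; each tree edge $f=(u,v)$ is mapped to a path $\mathcal M(f)$ in $G$ between $\mathcal M(u)$ and $\mathcal M(v)$; $y(f)=\tilde x(\delta_G(X))$ where $(X,V\setminus X)$ is the leaf partition induced by $\mathcal T-f$. $\mathcal M^{-1}(e)=\{f: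 e\in\mathcal M(f)\}$, $\mathcal M^{-1}(F)=\bigcup_{e\in F}\mathcal M^{-1}(e)$. $\mathcal D$ is a probability distribution over tree embeddings of $(G,\tilde x)$ with $\mathbb{E}_{\mathcal T\sim\mathcal D}[\sum_{f\in\mathcal M^{-1}(e)}y(f)]\le\beta\,\tilde x_e$ for every $e\in E$, and for every tree in its support and all disjoint $A,B\subseteq V$, the maximum $A$–$B$ flow in $\mathcal T$ under $y$ is at least the maximum $A$–$B$ flow in $G$ under $\tilde x$. A tree embedding is good for $F\subseteq E(H)$ if $\sum_{f\in\mathcal M^{-1}(F)}y(f)\le1/2$. $\mathbb Q^F$ is the set of vertex sets of connected components of $(V,E(H)\setminus F)$. A component $Q\in\mathbb Q^F$ is shattered (w.r.t. $\mathcal T$) if its leaves are not all in one connected component of $\mathcal T$ with the edges $\mathcal M^{-1}(F)$ removed. *)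

theory Defs
  imports "HOL-Probability.Probability"
begin

text \<open>Multigraphs are given by a vertex set, an edge set of an abstract edge type,
and an endpoint map; every edge has exactly two distinct endpoints.\<close>

definition wf_graph :: "'v set \<Rightarrow> 'e set \<Rightarrow> ('e \<Rightarrow> 'v set) \<Rightarrow> bool" where
  "wf_graph V E ends \<longleftrightarrow> finite V \<and> finite E \<and>
     (\<forall>e\<in>E. ends e \<subseteq> V \<and> card (ends e) = 2)"

definition reach :: "'v set \<Rightarrow> 'e set \<Rightarrow> ('e \<Rightarrow> 'v set) \<Rightarrow> 'v \<Rightarrow> 'v \<Rightarrow> bool" where
  "reach N Ed ends u v \<longleftrightarrow> u \<in> N \<and>
     (u, v) \<in> {(a, b). \<exists>e\<in>Ed. ends e = {a, b}}\<^sup>*"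

definition components :: "'v set \<Rightarrow> 'e set \<Rightarrow> ('e \<Rightarrow> 'v set) \<Rightarrow> 'v set set" where
  "components N Ed ends = {{v. reach N Ed ends u v} | u. u \<in> N}"

definition cut :: "'e set \<Rightarrow> ('e \<Rightarrow> 'v set) \<Rightarrow> 'v set \<Rightarrow> 'e set" where
  "cut E ends X = {e \<in> E. ends e \<inter> X \<noteq> {} \<and> ends e - X \<noteq> {}}"

definition is_path :: "'v set \<Rightarrow> 'e set \<Rightarrow> ('e \<Rightarrow> 'v set) \<Rightarrow> 'v \<Rightarrow> 'v \<Rightarrow> 'e list \<Rightarrow> bool" where
  "is_path V E ends u v es \<longleftrightarrow> set es \<subseteq> E \<and>
     (\<exists>vs. length vs = Suc (length es) \<and> hd vs = u \<and> last vs = v \<and> set vs \<subseteq> V \<and>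
        distinct vs \<and> (\<forall>i<length es. ends (es ! i) = {vs ! i, vs ! Suc i}))"

definition is_cycle :: "'e set \<Rightarrow> ('e \<Rightarrow> 'v set) \<Rightarrow> 'e list \<Rightarrow> bool" where
  "is_cycle E ends es \<longleftrightarrow> es \<noteq> [] \<and> set es \<subseteq> E \<and> distinct es \<and>
     (\<exists>vs. length vs = Suc (length es) \<and> hd vs = last vs \<and> distinct (tl vs) \<and>
        (\<forall>i<length es. ends (es ! i) = {vs ! i, vs ! Suc i}))"

definition is_tree :: "'n set \<Rightarrow> 'f set \<Rightarrow> ('f \<Rightarrow> 'n set) \<Rightarrow> bool" where
  "is_tree N TE tends \<longleftrightarrow> wf_graph N TE tends \<and> N \<noteq> {} \<and>
     (\<forall>u\<in>N. \<forall>v\<in>N. reach N TE tends u v) \<and> \<not> (\<exists>es. is_cycle TE tends es)"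

text \<open>Flows in an undirected graph with capacities c between vertex sets A and B.
  g e w is the net amount of flow leaving vertex w through edge e.\<close>
definition is_flow :: "'v set \<Rightarrow> 'e set \<Rightarrow> ('e \<Rightarrow> 'v set) \<Rightarrow> ('e \<Rightarrow> real) \<Rightarrow>
    'v set \<Rightarrow> 'v set \<Rightarrow> ('e \<Rightarrow> 'v \<Rightarrow> real) \<Rightarrow> bool" where
  "is_flow N Ed ends c A B g \<longleftrightarrow>
     (\<forall>e\<in>Ed. \<forall>w. w \<notin> ends e \<longrightarrow> g e w = 0) \<and>
     (\<forall>e\<in>Ed. \<forall>u v. ends e = {u, v} \<longrightarrow> g e u = - g e v \<and> \<bar>g e u\<bar> \<le> c e) \<and>
     (\<forall>w\<in>N - (A \<union> B). (\<Sum>e\<in>Ed. g e w) = 0)"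

definition flow_value :: "'e set \<Rightarrow> 'v set \<Rightarrow> ('e \<Rightarrow> 'v \<Rightarrow> real) \<Rightarrow> real" where
  "flow_value Ed A g = (\<Sum>w\<in>A. \<Sum>e\<in>Ed. g e w)"

definition max_flow :: "'v set \<Rightarrow> 'e set \<Rightarrow> ('e \<Rightarrow> 'v set) \<Rightarrow> ('e \<Rightarrow> real) \<Rightarrow>
    'v set \<Rightarrow> 'v set \<Rightarrow> real" where
  "max_flow N Ed ends c A B = Sup {flow_value Ed A g | g. is_flow N Ed ends c A B g}"

text \<open>Tree embeddings (T, M, y): tree nodes, tree edges, tree edge endpoints,
  node map M, edge map M (tree edge to a path in G, as an edge list), and y.\<close>
record ('n, 'f, 'v, 'e) temb =
  tnodes :: "'n set"
  tedges :: "'f set"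
  tends  :: "'f \<Rightarrow> 'n set"
  nmap   :: "'n \<Rightarrow> 'v"
  emap   :: "'f \<Rightarrow> 'e list"
  ty     :: "'f \<Rightarrow> real"

definition leaves :: "('n, 'f, 'v, 'e) temb \<Rightarrow> 'n set" where
  "leaves \<tau> = {u \<in> tnodes \<tau>. card {f \<in> tedges \<tau>. u \<in> tends \<tau> f} \<le> 1}"

definition Minv :: "('n, 'f, 'v, 'e) temb \<Rightarrow> 'e set \<Rightarrow> 'f set" where
  "Minv \<tau> F = {f \<in> tedges \<tau>. \<exists>e\<in>F. e \<in> set (emap \<tau> f)}"

definition is_temb :: "'v set \<Rightarrow> 'e set \<Rightarrow> ('e \<Rightarrow> 'v set) \<Rightarrow> ('e \<Rightarrow> real) \<Rightarrow>
    ('n, 'f, 'v, 'e) temb \<Rightarrow> bool" where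
  "is_temb V E ends c \<tau> \<longleftrightarrow>
     is_tree (tnodes \<tau>) (tedges \<tau>) (tends \<tau>) \<and>
     nmap \<tau> ` tnodes \<tau> \<subseteq> V \<and>
     bij_betw (nmap \<tau>) (leaves \<tau>) V \<and>
     (\<forall>f\<in>tedges \<tau>. \<exists>u v. tends \<tau> f = {u, v} \<and>
        is_path V E ends (nmap \<tau> u) (nmap \<tau> v) (emap \<tau> f)) \<and>
     (\<forall>f\<in>tedges \<tau>. \<forall>u\<in>tends \<tau> f.
        ty \<tau> f = (\<Sum>e\<in>cut E ends
           (nmap \<tau> ` {l \<in> leaves \<tau>. reach (tnodes \<tau>) (tedges \<tau> - {f}) (tends \<tau>) u l}). c e))"

definition shattered :: "('n, 'f, 'v, 'e) temb \<Rightarrow> 'e set \<Rightarrow> 'v set \<Rightarrow> bool" where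
  "shattered \<tau> F Q \<longleftrightarrow>
     \<not> (\<forall>l1\<in>leaves \<tau>. \<forall>l2\<in>leaves \<tau>. nmap \<tau> l1 \<in> Q \<longrightarrow> nmap \<tau> l2 \<in> Q \<longrightarrow>
          reach (tnodes \<tau>) (tedges \<tau> - Minv \<tau> F) (tends \<tau>) l1 l2)"

definition good_for :: "('n, 'f, 'v, 'e) temb \<Rightarrow> 'e set \<Rightarrow> bool" where
  "good_for \<tau> F \<longleftrightarrow> (\<Sum>f\<in>Minv \<tau> F. ty \<tau> f) \<le> 1/2"

definition xtilde :: "nat \<Rightarrow> real \<Rightarrow> nat \<Rightarrow> ('e \<Rightarrow> real) \<Rightarrow> 'e \<Rightarrow> real" where
  "xtilde l \<beta> n x e =
     (if x e \<ge> 1 / (4 * real l * \<beta>) then 1 / (4 * real l * \<beta>)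
      else if x e < (1 / (2 * real n ^ 2)) * (1 / (4 * real l * \<beta>)) then 0
      else x e)"

definition LARGE :: "'e set \<Rightarrow> nat \<Rightarrow> real \<Rightarrow> ('e \<Rightarrow> real) \<Rightarrow> 'e set" where
  "LARGE E l \<beta> x = {e \<in> E. x e \<ge> 1 / (4 * real l * \<beta>)}"

end

theory Submission
  imports Defs "HOL-Library.Transitive_Closure_Table"
begin

text \<open>Let M be the set of tree edges whose paths use an edge of F. If a component Q of H - F is
  shattered, two of its leaves are separated in the tree minus M, hence (the tree having no
  cycles) already by removing a single edge f \<in> M. The leaf side X of f then splits Q, so some
  edge of H - F inside Q lies in \<delta>(X), and it carries capacity 1/(4 l \<beta>). Distinct components
  own distinct such edges, whence |shattered| / (4 l \<beta>) \<le> \<Sum>f\<in>M xtilde(\<delta>(X f)) = \<Sum>f\<in>M y f \<le> 1/2.\<close>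

definition edge_rel :: "'e set \<Rightarrow> ('e \<Rightarrow> 'v set) \<Rightarrow> ('v \<times> 'v) set" where
  "edge_rel Ed ends = {(a, b). \<exists>e\<in>Ed. ends e = {a, b}}"

lemma reach_iff_edge_rel: "reach N Ed ends u v \<longleftrightarrow> u \<in> N \<and> (u, v) \<in> (edge_rel Ed ends)\<^sup>*"
  by (simp add: reach_def edge_rel_def)

lemma sym_edge_rel: "sym (edge_rel Ed ends)"
  by (auto simp: edge_rel_def insert_commute intro: symI)

lemma edge_rel_rtrancl_sym: "(a, b) \<in> (edge_rel Ed ends)\<^sup>* \<Longrightarrow> (b, a) \<in> (edge_rel Ed ends)\<^sup>*"
  using sym_rtrancl[OF sym_edge_rel] by (rule symD)

lemma edge_rel_rtrancl_mono: "Ed \<subseteq> Ed' \<Longrightarrow> (edge_rel Ed ends)\<^sup>* \<subseteq> (edge_rel Ed' ends)\<^sup>*"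
  by (rule rtrancl_mono) (auto simp: edge_rel_def)

lemma edge_rel_rtrancl_remove_edge:
  assumes "(a, b) \<in> (edge_rel Ed ends)\<^sup>*" "ends f = {p, q}"
  shows "(a, b) \<in> (edge_rel (Ed - {f}) ends)\<^sup>* \<or>
    (a, p) \<in> (edge_rel (Ed - {f}) ends)\<^sup>* \<and> (q, b) \<in> (edge_rel (Ed - {f}) ends)\<^sup>* \<or>
    (a, q) \<in> (edge_rel (Ed - {f}) ends)\<^sup>* \<and> (p, b) \<in> (edge_rel (Ed - {f}) ends)\<^sup>*"
  using assms(1)
proof (induction rule: rtrancl_induct)
  case (step y z)
  from step.hyps(2) obtain e where e: "e \<in> Ed" "ends e = {y, z}" by (auto simp: edge_rel_def)
  show ?case
  proof (cases "e = f")
    case True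
    then have "{y, z} = {p, q}" using e(2) assms(2) by simp
    then have "y = p \<and> z = q \<or> y = q \<and> z = p" by (simp only: doubleton_eq_iff)
    then show ?thesis using step.IH by auto
  next
    case False
    then have "(y, z) \<in> edge_rel (Ed - {f}) ends" using e by (auto simp: edge_rel_def)
    then show ?thesis using step.IH by (meson rtrancl_into_rtrancl)
  qed
qed simp

lemma rtrancl_path_edge_rel_edges:
  assumes "rtrancl_path (\<lambda>a b. (a, b) \<in> edge_rel Ed ends) x xs y"
  shows "\<exists>es. length es = length xs \<and> set es \<subseteq> Ed \<and>
    (\<forall>i<length xs. ends (es ! i) = {(x # xs) ! i, (x # xs) ! Suc i})"
  using assms
proof (induction rule: rtrancl_path.induct)
  case (step x y ys z)
  then obtain es where es: "length es = length ys" "set es \<subseteq> Ed"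
    "\<forall>i<length ys. ends (es ! i) = {(y # ys) ! i, (y # ys) ! Suc i}"
    by blast
  obtain e where e: "e \<in> Ed" "ends e = {x, y}" using step.hyps(1) by (auto simp: edge_rel_def)
  have "\<forall>i<length (y # ys). ends ((e # es) ! i) = {(x # y # ys) ! i, (x # y # ys) ! Suc i}"
  proof (intro allI impI)
    fix i assume "i < length (y # ys)"
    then show "ends ((e # es) ! i) = {(x # y # ys) ! i, (x # y # ys) ! Suc i}"
      using es(3) e(2) by (cases i) simp_all
  qed
  then show ?case using es e by (intro exI[of _ "e # es"]) simp
qed simp

lemma edge_rel_rtrancl_simple_walk:
  assumes "(u, v) \<in> (edge_rel Ed ends)\<^sup>*"
  obtains vs es where "length vs = Suc (length es)" "hd vs = u" "last vs = v" "distinct vs"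
    "set es \<subseteq> Ed" "\<forall>i<length es. ends (es ! i) = {vs ! i, vs ! Suc i}"
proof -
  let ?r = "\<lambda>a b. (a, b) \<in> edge_rel Ed ends"
  obtain xs where "rtrancl_path ?r u xs v"
    using assms rtranclp_eq_rtrancl_path[of ?r] by (auto simp: rtrancl_def)
  then obtain xs' where xs': "rtrancl_path ?r u xs' v" "distinct (u # xs')"
    by (rule rtrancl_path_distinct)
  obtain es where "length es = length xs'" "set es \<subseteq> Ed"
    "\<forall>i<length xs'. ends (es ! i) = {(u # xs') ! i, (u # xs') ! Suc i}"
    using rtrancl_path_edge_rel_edges[OF xs'(1)] by blast
  moreover have "last (u # xs') = v"
  proof (cases "xs' = []")
    case True
    then show ?thesis using xs'(1) by (auto elim: rtrancl_path.cases)
  next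
    case False
    then show ?thesis using rtrancl_path_last[OF xs'(1)] by simp
  qed
  ultimately show thesis using that[of "u # xs'" es] xs'(2) by simp
qed

lemma distinct_edges_of_distinct_walk:
  assumes vs: "distinct vs" "length vs = Suc (length es)"
    and es: "\<forall>i<length es. ends (es ! i) = {vs ! i, vs ! Suc i}"
  shows "distinct es"
proof -
  have ne: "es ! i \<noteq> es ! j" if "i < j" "j < length es" for i j
  proof -
    have "vs ! i \<noteq> vs ! j" "vs ! i \<noteq> vs ! Suc j"
      using nth_eq_iff_index_eq[OF vs(1)] vs(2) that by auto
    moreover have "ends (es ! i) = {vs ! i, vs ! Suc i}" "ends (es ! j) = {vs ! j, vs ! Suc j}"
      using es that by simp_all
    ultimately show ?thesis by force
  qed
  show ?thesis
  proof (rule distinct_conv_nth[THEN iffD2], intro allI impI)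
    fix i j assume "i < length es" "j < length es" "i \<noteq> j"
    then show "es ! i \<noteq> es ! j" using ne[of i j] ne[of j i] by (metis linorder_neqE_nat)
  qed
qed

text \<open>In a graph without cycles every edge is a bridge: a walk avoiding f between its
  endpoints would close a cycle with f.\<close>
lemma acyclic_edge_endpoints_disconnected:
  assumes acyc: "\<not> (\<exists>es. is_cycle TE te es)" and f: "f \<in> TE" "te f = {p, q}" "p \<noteq> q"
  shows "(p, q) \<notin> (edge_rel (TE - {f}) te)\<^sup>*"
proof
  assume "(p, q) \<in> (edge_rel (TE - {f}) te)\<^sup>*"
  then obtain vs es where w: "length vs = Suc (length es)" "hd vs = p" "last vs = q"
    "distinct vs" "set es \<subseteq> TE - {f}" "\<forall>i<length es. te (es ! i) = {vs ! i, vs ! Suc i}"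
    by (rule edge_rel_rtrancl_simple_walk)
  obtain ws where vs: "vs = p # ws" "ws \<noteq> []"
    using w(1-3) f(3) by (cases vs) (auto split: if_splits)
  have "is_cycle TE te (f # es)"
    unfolding is_cycle_def
  proof (intro conjI exI[of _ "q # vs"])
    show "distinct (f # es)"
      using distinct_edges_of_distinct_walk[OF w(4,1,6)] w(5) by auto
    show "hd (q # vs) = last (q # vs)" using w(3) vs by simp
    show "\<forall>i<length (f # es). te ((f # es) ! i) = {(q # vs) ! i, (q # vs) ! Suc i}"
    proof (intro allI impI)
      fix i assume "i < length (f # es)"
      then show "te ((f # es) ! i) = {(q # vs) ! i, (q # vs) ! Suc i}"
        using w(6) f(2) vs(1) by (cases i) (auto simp: insert_commute)
    qed
  qed (use w(1,4,5) f(1) in auto)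
  then show False using acyc by blast
qed

lemma edge_endpoint_reaches_one_side:
  assumes a: "(u, a) \<in> (edge_rel Ed ends)\<^sup>*" and b: "(u, b) \<in> (edge_rel Ed ends)\<^sup>*"
    and f: "ends f = {u, w}" and sep: "(a, b) \<notin> (edge_rel (Ed - {f}) ends)\<^sup>*"
  shows "(u, a) \<in> (edge_rel (Ed - {f}) ends)\<^sup>* \<longleftrightarrow> (u, b) \<notin> (edge_rel (Ed - {f}) ends)\<^sup>*"
proof -
  let ?R = "edge_rel (Ed - {f}) ends"
  have no_common: "\<not> ((v, a) \<in> ?R\<^sup>* \<and> (v, b) \<in> ?R\<^sup>*)" for v
    using sep by (meson edge_rel_rtrancl_sym rtrancl_trans)
  have far_end: "(w, z) \<in> ?R\<^sup>*"
    if z: "(u, z) \<in> (edge_rel Ed ends)\<^sup>*" "(u, z) \<notin> ?R\<^sup>*" for z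
    using edge_rel_rtrancl_remove_edge[OF z(1) f] z(2) by blast
  show ?thesis
    using no_common[of u] no_common[of w] far_end[OF a] far_end[OF b] by blast
qed

lemma tree_separating_edge:
  assumes tree: "is_tree N TE te" and R: "finite R" and ab: "a \<in> N" "b \<in> N"
    and "(a, b) \<notin> (edge_rel (TE - R) te)\<^sup>*"
  shows "\<exists>f\<in>R. (a, b) \<notin> (edge_rel (TE - {f}) te)\<^sup>*"
  using R \<open>(a, b) \<notin> _\<close>
proof (induction R rule: finite_induct)
  case empty
  then show ?case using tree ab by (auto simp: is_tree_def reach_iff_edge_rel)
next
  case (insert f R)
  let ?R = "edge_rel (TE - R - {f}) te" and ?Rf = "edge_rel (TE - {f}) te"
  show ?case
  proof (cases "(a, b) \<in> (edge_rel (TE - R) te)\<^sup>*")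
    case False
    then show ?thesis using insert.IH by blast
  next
    case True
    have "TE - insert f R = TE - R - {f}" by blast
    then have sep: "(a, b) \<notin> ?R\<^sup>*" using insert.prems by simp
    have "f \<in> TE"
    proof (rule ccontr)
      assume "f \<notin> TE"
      then have "TE - R - {f} = TE - R" by blast
      then show False using True sep by simp
    qed
    then have "card (te f) = 2" using tree by (simp add: is_tree_def wf_graph_def)
    then obtain p q where pq: "te f = {p, q}" "p \<noteq> q" by (auto simp: card_2_iff)
    have "?R\<^sup>* \<subseteq> ?Rf\<^sup>*" by (rule edge_rel_rtrancl_mono) blast
    then have "(a, p) \<in> ?Rf\<^sup>* \<and> (q, b) \<in> ?Rf\<^sup>* \<or> (a, q) \<in> ?Rf\<^sup>* \<and> (p, b) \<in> ?Rf\<^sup>*"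
      using edge_rel_rtrancl_remove_edge[OF True pq(1)] sep by blast
    moreover have "(p, q) \<notin> ?Rf\<^sup>*"
      using acyclic_edge_endpoints_disconnected[of TE te, OF _ \<open>f \<in> TE\<close> pq] tree
      by (simp add: is_tree_def)
    ultimately have "(a, b) \<notin> ?Rf\<^sup>*"
      by (meson edge_rel_rtrancl_sym rtrancl_trans)
    then show ?thesis by blast
  qed
qed

lemma components_disjoint:
  assumes "Q \<in> components V Ed ends" "Q' \<in> components V Ed ends" "Q \<noteq> Q'"
  shows "Q \<inter> Q' = {}"
proof (rule ccontr)
  obtain w w' where w: "w \<in> V" "Q = {z. (w, z) \<in> (edge_rel Ed ends)\<^sup>*}"
    and w': "w' \<in> V" "Q' = {z. (w', z) \<in> (edge_rel Ed ends)\<^sup>*}"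
    using assms(1,2) by (auto simp: components_def reach_iff_edge_rel)
  assume "Q \<inter> Q' \<noteq> {}"
  then obtain v where "(w, v) \<in> (edge_rel Ed ends)\<^sup>*" "(w', v) \<in> (edge_rel Ed ends)\<^sup>*"
    using w w' by blast
  then have "(w, w') \<in> (edge_rel Ed ends)\<^sup>*" "(w', w) \<in> (edge_rel Ed ends)\<^sup>*"
    by (meson edge_rel_rtrancl_sym rtrancl_trans)+
  then have "Q = Q'" unfolding w(2) w'(2) by (meson rtrancl_trans)
  then show False using assms(3) by blast
qed

lemma components_inner_edges_disjoint:
  assumes "wf_graph V E ends" "Ed \<subseteq> E"
  shows "disjoint_family_on (\<lambda>Q. {e \<in> Ed. ends e \<subseteq> Q}) (components V Ed ends)"
  unfolding disjoint_family_on_def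
proof (intro ballI impI)
  fix Q Q' assume QQ': "Q \<in> components V Ed ends" "Q' \<in> components V Ed ends" "Q \<noteq> Q'"
  have "ends e \<noteq> {}" if "e \<in> Ed" for e
    using assms that by (fastforce simp: wf_graph_def)
  then show "{e \<in> Ed. ends e \<subseteq> Q} \<inter> {e \<in> Ed. ends e \<subseteq> Q'} = {}"
    using components_disjoint[OF QQ'] by blast
qed

lemma rtrancl_crossing_step:
  assumes "(x, y) \<in> r\<^sup>*" "x \<in> X" "y \<notin> X"
  shows "\<exists>a b. (x, a) \<in> r\<^sup>* \<and> (a, b) \<in> r \<and> a \<in> X \<and> b \<notin> X"
  using assms
proof (induction rule: rtrancl_induct)
  case (step y z)
  then show ?case by (cases "y \<in> X") (blast intro: rtrancl_into_rtrancl)+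
qed simp

lemma component_crossing_edge:
  assumes Q: "Q \<in> components V Ed ends" and ab: "a \<in> Q" "b \<in> Q" "a \<in> X" "b \<notin> X"
  shows "\<exists>e\<in>Ed. ends e \<subseteq> Q \<and> ends e \<inter> X \<noteq> {} \<and> ends e - X \<noteq> {}"
proof -
  let ?r = "edge_rel Ed ends"
  obtain w where w: "Q = {z. (w, z) \<in> ?r\<^sup>*}"
    using Q by (auto simp: components_def reach_iff_edge_rel)
  have "(a, b) \<in> ?r\<^sup>*"
    using ab(1,2) unfolding w by (meson edge_rel_rtrancl_sym mem_Collect_eq rtrancl_trans)
  then obtain a' b' where ab': "(a, a') \<in> ?r\<^sup>*" "(a', b') \<in> ?r" "a' \<in> X" "b' \<notin> X"
    using rtrancl_crossing_step ab(3,4) by metis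
  then obtain e where e: "e \<in> Ed" "ends e = {a', b'}" by (auto simp: edge_rel_def)
  have "a' \<in> Q" "b' \<in> Q"
    using ab(1) ab'(1,2) unfolding w by (auto intro: rtrancl_trans rtrancl_into_rtrancl)
  then show ?thesis using e ab'(3,4) by (intro bexI[of _ e]) auto
qed

text \<open>The vertex set X with y f = xtilde(\<delta>(X)). SOME picks an endpoint of f; the definition of a
  tree embedding gives the equation for either endpoint.\<close>
definition leaf_side :: "('n, 'f, 'v, 'e) temb \<Rightarrow> 'f \<Rightarrow> 'v set" where
  "leaf_side \<tau> f = nmap \<tau> ` {l \<in> leaves \<tau>.
     reach (tnodes \<tau>) (tedges \<tau> - {f}) (tends \<tau>) (SOME u. u \<in> tends \<tau> f) l}"

lemma temb_some_end:
  assumes "is_temb V E ends c \<tau>" "f \<in> tedges \<tau>"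
  shows "(SOME u. u \<in> tends \<tau> f) \<in> tends \<tau> f"
proof -
  have "card (tends \<tau> f) = 2" using assms by (simp add: is_temb_def is_tree_def wf_graph_def)
  then show ?thesis by (auto simp: some_in_eq)
qed

lemma temb_ty_eq_cut_leaf_side:
  assumes "is_temb V E ends c \<tau>" "f \<in> tedges \<tau>"
  shows "ty \<tau> f = (\<Sum>e\<in>cut E ends (leaf_side \<tau> f). c e)"
  using assms temb_some_end[OF assms] by (simp add: is_temb_def leaf_side_def)

lemma temb_mem_leaf_side_iff:
  assumes emb: "is_temb V E ends c \<tau>" and l: "l \<in> leaves \<tau>" and f: "f \<in> tedges \<tau>"
  shows "nmap \<tau> l \<in> leaf_side \<tau> f \<longleftrightarrow>
    ((SOME u. u \<in> tends \<tau> f), l) \<in> (edge_rel (tedges \<tau> - {f}) (tends \<tau>))\<^sup>*"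
proof -
  have "inj_on (nmap \<tau>) (leaves \<tau>)" using emb by (simp add: is_temb_def bij_betw_def)
  moreover have "tends \<tau> f \<subseteq> tnodes \<tau>" using emb f by (simp add: is_temb_def is_tree_def wf_graph_def)
  ultimately show ?thesis
    using l temb_some_end[OF emb f]
    by (auto simp: leaf_side_def reach_iff_edge_rel inj_on_image_mem_iff)
qed

lemma shattered_component_crossing_edge:
  assumes emb: "is_temb V E ends c \<tau>" and Q: "Q \<in> components V Ed ends" "Ed \<subseteq> E"
    and sh: "shattered \<tau> F Q"
  shows "\<exists>f\<in>Minv \<tau> F. \<exists>e\<in>Ed. ends e \<subseteq> Q \<and> e \<in> cut E ends (leaf_side \<tau> f)"
proof -
  let ?N = "tnodes \<tau>" and ?TE = "tedges \<tau>" and ?te = "tends \<tau>"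
  have tree: "is_tree ?N ?TE ?te" using emb by (simp add: is_temb_def)
  then have wf: "wf_graph ?N ?TE ?te" and conn: "\<forall>u\<in>?N. \<forall>v\<in>?N. reach ?N ?TE ?te u v"
    by (simp_all add: is_tree_def)
  obtain a b where ab: "a \<in> leaves \<tau>" "b \<in> leaves \<tau>" "nmap \<tau> a \<in> Q" "nmap \<tau> b \<in> Q"
    "\<not> reach ?N (?TE - Minv \<tau> F) ?te a b"
    using sh unfolding shattered_def by blast
  have abN: "a \<in> ?N" "b \<in> ?N" using ab(1,2) by (auto simp: leaves_def)
  have "Minv \<tau> F \<subseteq> ?TE" "finite ?TE" using wf by (auto simp: Minv_def wf_graph_def)
  then have "finite (Minv \<tau> F)" by (rule finite_subset)
  then obtain f where f: "f \<in> Minv \<tau> F" "(a, b) \<notin> (edge_rel (?TE - {f}) ?te)\<^sup>*"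
    using tree_separating_edge[OF tree _ abN] ab(5) abN by (auto simp: reach_iff_edge_rel)
  have fT: "f \<in> ?TE" using f(1) by (simp add: Minv_def)
  define u where "u = (SOME u. u \<in> ?te f)"
  have "card (?te f) = 2" "?te f \<subseteq> ?N" using wf fT by (auto simp: wf_graph_def)
  then obtain p q where "?te f = {p, q}" and uN: "u \<in> ?N"
    using temb_some_end[OF emb fT] unfolding u_def by (auto simp: card_2_iff)
  then have w: "?te f = {u, if u = p then q else p}"
    using temb_some_end[OF emb fT] unfolding u_def by auto
  have "(u, a) \<in> (edge_rel ?TE ?te)\<^sup>*" "(u, b) \<in> (edge_rel ?TE ?te)\<^sup>*"
    using conn uN abN by (auto simp: reach_iff_edge_rel)
  then have "(u, a) \<in> (edge_rel (?TE - {f}) ?te)\<^sup>* \<longleftrightarrow> (u, b) \<notin> (edge_rel (?TE - {f}) ?te)\<^sup>*"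
    using edge_endpoint_reaches_one_side w f(2) by metis
  then have "nmap \<tau> a \<in> leaf_side \<tau> f \<longleftrightarrow> nmap \<tau> b \<notin> leaf_side \<tau> f"
    unfolding temb_mem_leaf_side_iff[OF emb ab(1) fT] temb_mem_leaf_side_iff[OF emb ab(2) fT] u_def .
  then have "\<exists>e\<in>Ed. ends e \<subseteq> Q \<and> ends e \<inter> leaf_side \<tau> f \<noteq> {} \<and> ends e - leaf_side \<tau> f \<noteq> {}"
    using component_crossing_edge[OF Q(1) ab(3,4)] component_crossing_edge[OF Q(1) ab(4,3)]
    by (cases "nmap \<tau> a \<in> leaf_side \<tau> f") simp_all
  then show ?thesis using Q(2) f(1) unfolding cut_def by blast
qed

lemma card_mult_le_sum_sum_by_disjoint_witnesses:
  fixes c :: "'e \<Rightarrow> real"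
  assumes M: "finite M" "\<And>f. f \<in> M \<Longrightarrow> finite (C f)"
    and c: "\<And>e. e \<in> (\<Union>f\<in>M. C f) \<Longrightarrow> 0 \<le> c e"
    and K: "disjoint_family_on K S" "\<And>s. s \<in> S \<Longrightarrow> \<exists>e\<in>K s. e \<in> (\<Union>f\<in>M. C f) \<and> c e = \<delta>"
  shows "real (card S) * \<delta> \<le> (\<Sum>f\<in>M. \<Sum>e\<in>C f. c e)"
proof -
  let ?U = "\<Union>f\<in>M. C f"
  obtain g where g: "\<And>s. s \<in> S \<Longrightarrow> g s \<in> K s \<and> g s \<in> ?U \<and> c (g s) = \<delta>"
    using K(2) by metis
  have inj: "inj_on g S"
  proof
    fix s s' assume ss: "s \<in> S" "s' \<in> S" "g s = g s'"
    then have "g s \<in> K s \<inter> K s'" using g[of s] g[of s'] by simp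
    then show "s = s'" using K(1) ss(1,2) by (auto simp: disjoint_family_on_def)
  qed
  have U: "finite ?U" using M by blast
  then have "finite (g ` S)" using g by (blast intro: finite_subset)
  then have S: "finite S" using inj by (simp add: finite_image_iff)
  have "real (card S) * \<delta> = (\<Sum>s\<in>S. c (g s))" using g by simp
  also have "\<dots> = (\<Sum>e\<in>g ` S. c e)" using sum.reindex[OF inj, of c] by simp
  also have "\<dots> \<le> (\<Sum>e\<in>?U. c e)" using U g c by (intro sum_mono2) auto
  also have "\<dots> = (\<Sum>e\<in>snd ` Sigma M C. c e)" by (simp add: snd_image_Sigma)
  also have "\<dots> \<le> (\<Sum>p\<in>Sigma M C. c (snd p))"
  proof -
    have "\<And>p. p \<in> Sigma M C \<Longrightarrow> 0 \<le> c (snd p)" by (auto intro!: c)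
    moreover have "finite (Sigma M C)" using M by auto
    ultimately show ?thesis using sum_image_le[of "Sigma M C" c snd] by (simp add: comp_def)
  qed
  also have "\<dots> = (\<Sum>f\<in>M. \<Sum>e\<in>C f. c e)" using M by (simp add: sum.Sigma split_def)
  finally show ?thesis .
qed

lemma xtilde_nonneg:
  assumes "0 \<le> \<beta>"
  shows "0 \<le> xtilde l \<beta> n x e"
proof -
  have "0 \<le> 1 / (4 * real l * \<beta>)" "0 \<le> 1 / (2 * real n ^ 2) * (1 / (4 * real l * \<beta>))"
    using assms by simp_all
  then show ?thesis unfolding xtilde_def by (smt (verit))
qed

theorem lemma5p9:
  fixes V :: "'v set" and E :: "'e set" and ends :: "'e \<Rightarrow> 'v set"
    and q :: nat and S T :: "nat \<Rightarrow> 'v set"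
    and l :: nat and El :: "'e set" and x :: "'e \<Rightarrow> real" and \<beta> :: real
    and D :: "('n, 'f, 'v, 'e) temb pmf"
    and F :: "'e set" and \<tau> :: "('n, 'f, 'v, 'e) temb"
  assumes G: "wf_graph V E ends"
    and ST: "\<forall>i<q. S i \<subseteq> V \<and> T i \<subseteq> V"
    and l1: "l \<ge> 1"
    and El: "El \<subseteq> E"
    and Elconn: "\<forall>i<q. \<forall>X. T i \<subseteq> X \<and> X \<subseteq> V - S i \<longrightarrow> card (cut El ends X) \<ge> l"
    and x01: "\<forall>e\<in>E. 0 \<le> x e \<and> x e \<le> 1"
    and xEl: "\<forall>e\<in>El. x e = 1"
    and xcut: "\<forall>i<q. \<forall>X. T i \<subseteq> X \<and> X \<subseteq> V - S i \<longrightarrow>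
                 (\<Sum>e\<in>cut E ends X. x e) \<ge> real l + 1"
    and beta: "\<beta> \<ge> 1"
    and Demb: "\<forall>\<sigma>\<in>set_pmf D. is_temb V E ends (xtilde l \<beta> (card V) x) \<sigma>"
    and Dstretch: "\<forall>e\<in>E. (\<integral>\<^sup>+ \<sigma>. ennreal (\<Sum>f\<in>Minv \<sigma> {e}. ty \<sigma> f) \<partial>measure_pmf D)
                      \<le> ennreal (\<beta> * xtilde l \<beta> (card V) x e)"
    and Dflow: "\<forall>\<sigma>\<in>set_pmf D. \<forall>A B. A \<subseteq> V \<and> B \<subseteq> V \<and> A \<inter> B = {} \<longrightarrow>
                  max_flow (tnodes \<sigma>) (tedges \<sigma>) (tends \<sigma>) (ty \<sigma>)
                    {u \<in> leaves \<sigma>. nmap \<sigma> u \<in> A} {u \<in> leaves \<sigma>. nmap \<sigma> u \<in> B}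
                  \<ge> max_flow V E ends (xtilde l \<beta> (card V) x) A B"
    and FH: "F \<subseteq> LARGE E l \<beta> x"
    and Fcard: "card F = l"
    and tau: "\<tau> \<in> set_pmf D"
    and good: "good_for \<tau> F"
  shows "real (card {Q \<in> components V (LARGE E l \<beta> x - F) ends. shattered \<tau> F Q})
           \<le> 2 * real l * \<beta>"
proof -
  let ?L = "LARGE E l \<beta> x" and ?c = "xtilde l \<beta> (card V) x" and ?M = "Minv \<tau> F"
  let ?Sh = "{Q \<in> components V (?L - F) ends. shattered \<tau> F Q}"
  define \<delta> where "\<delta> = 1 / (4 * real l * \<beta>)"
  have emb: "is_temb V E ends ?c \<tau>" using Demb tau by blast
  have LF: "?L - F \<subseteq> E" by (auto simp: LARGE_def)
  have M_sub: "?M \<subseteq> tedges \<tau>" and "finite (tedges \<tau>)"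
    using emb by (auto simp: Minv_def is_temb_def is_tree_def wf_graph_def)
  then have fin_M: "finite ?M" by (rule finite_subset)
  have fin_cut: "finite (cut E ends Y)" for Y
    using G by (simp add: wf_graph_def cut_def)
  have witness: "\<exists>e\<in>{e \<in> ?L - F. ends e \<subseteq> Q}. e \<in> (\<Union>f\<in>?M. cut E ends (leaf_side \<tau> f)) \<and> ?c e = \<delta>"
    if Q: "Q \<in> ?Sh" for Q
  proof -
    obtain f e where "f \<in> ?M" "e \<in> ?L - F" "ends e \<subseteq> Q" "e \<in> cut E ends (leaf_side \<tau> f)"
      using shattered_component_crossing_edge[OF emb _ LF, of Q F] Q by blast
    moreover from \<open>e \<in> ?L - F\<close> have "?c e = \<delta>" by (simp add: \<delta>_def xtilde_def LARGE_def)
    ultimately show ?thesis by blast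
  qed
  have disj: "disjoint_family_on (\<lambda>Q. {e \<in> ?L - F. ends e \<subseteq> Q}) ?Sh"
    using components_inner_edges_disjoint[OF G LF] by (rule disjoint_family_on_mono[rotated]) blast
  have "0 \<le> ?c e" for e using beta by (simp add: xtilde_nonneg)
  then have "real (card ?Sh) * \<delta> \<le> (\<Sum>f\<in>?M. \<Sum>e\<in>cut E ends (leaf_side \<tau> f). ?c e)"
    by (rule card_mult_le_sum_sum_by_disjoint_witnesses[OF fin_M fin_cut _ disj witness])
  also have "\<dots> = (\<Sum>f\<in>?M. ty \<tau> f)"
    by (rule sum.cong[OF refl]) (simp add: temb_ty_eq_cut_leaf_side[OF emb] subsetD[OF M_sub])
  also have "\<dots> \<le> 1 / 2" using good by (simp add: good_for_def)
  finally have "real (card ?Sh) * \<delta> \<le> 1 / 2" .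
  then show ?thesis using l1 beta by (simp add: \<delta>_def field_simps)
qed

end
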